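(* Let $L$ be a pentagonal linkage and $X_k=\{P\in\overline{M^C}(L): |A_3A_5|=k\}$ a slice. On the relative interior of $X_k$, parameterize the slice by $x_2$ and denote by a prime the derivative $d/dx_2$. Then $$(-x_1)'=\frac{S_{125}}{S_{123}}\cdot\frac{S_{235}}{S_{135}},\qquad (-x_3)'=\frac{S_{234}}{S_{135}}\cdot\frac{S_{125}}{S_{123}},\qquad (x_5)'=\frac{S_{145}}{S_{135}}.$$
   Context: A pentagonal linkage $L$ is given by side lengths $a_1,\dots,a_5>0$; $M(L)$ is the set of planar 5-gons $(A_1,\dots,A_5)$ with $|A_iA_{i+1}|=a_i$ (indices mod 5) modulo all isometries of $\mathbb{R}^2$; $M^C(L)$ is the set of strictly convex configurations (convex pentagon $A_1\dots A_5$ in this cyclic order, no angle equal to $\pi$) and $\overline{M^C}(L)$ its closure. $b_i=|A_{i-1}A_{i+1}|$, $x_i=b_i^2$ (indices mod 5); on a slice $x_4=k^2$ is fixed and $x_1,x_3,x_5$ are functions of $x_2$. $S_{ijk}$ is the oriented area of triangle $A_iA_jA_k$ with respect to a fixed orientation of the plane. *)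

theory Defs
  imports "HOL-Analysis.Analysis"
begin

type_synonym pt = "real \<times> real"

text \<open>A planar pentagon is given by its vertices A 1, ..., A 5; indices are read mod 5
  (vtx A 0 = A 5, vtx A 6 = A 1, ...).\<close>
definition vtx :: "(nat \<Rightarrow> pt) \<Rightarrow> nat \<Rightarrow> pt" where
  "vtx A i = A ((i + 4) mod 5 + 1)"

definition sqd :: "pt \<Rightarrow> pt \<Rightarrow> real" where
  "sqd p q = (fst p - fst q)\<^sup>2 + (snd p - snd q)\<^sup>2"

definition oarea :: "(nat \<Rightarrow> pt) \<Rightarrow> nat \<Rightarrow> nat \<Rightarrow> nat \<Rightarrow> real" where
  "oarea A i j k = (let P = vtx A i; Q = vtx A j; R = vtx A k in
     ((fst Q - fst P) * (snd R - snd P) - (snd Q - snd P) * (fst R - fst P)) / 2)"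

text \<open>x_i = b_i^2 = |A_{i-1} A_{i+1}|^2.\<close>
definition xsq :: "(nat \<Rightarrow> pt) \<Rightarrow> nat \<Rightarrow> real" where
  "xsq A i = sqd (vtx A (i + 4)) (vtx A (i + 1))"

definition realizes :: "(nat \<Rightarrow> real) \<Rightarrow> (nat \<Rightarrow> pt) \<Rightarrow> bool" where
  "realizes a A \<longleftrightarrow> (\<forall>i\<in>{1..5}. sqrt (sqd (vtx A i) (vtx A (i + 1))) = a i)"

definition strictly_convex :: "(nat \<Rightarrow> pt) \<Rightarrow> bool" where
  "strictly_convex A \<longleftrightarrow>
     (\<forall>i\<in>{1..5}. \<forall>j\<in>{1..5}. j \<noteq> i \<and> j \<noteq> (i mod 5) + 1 \<longrightarrow> oarea A i (i + 1) j > 0) \<or>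
     (\<forall>i\<in>{1..5}. \<forall>j\<in>{1..5}. j \<noteq> i \<and> j \<noteq> (i mod 5) + 1 \<longrightarrow> oarea A i (i + 1) j < 0)"

text \<open>Strictly convex configurations of the slice |A_3 A_5| = k (the relative interior of X_k).\<close>
definition in_slice :: "(nat \<Rightarrow> real) \<Rightarrow> real \<Rightarrow> (nat \<Rightarrow> pt) \<Rightarrow> bool" where
  "in_slice a k A \<longleftrightarrow> realizes a A \<and> strictly_convex A \<and> sqrt (sqd (vtx A 3) (vtx A 5)) = k"

definition slice_fun :: "(nat \<Rightarrow> real) \<Rightarrow> real \<Rightarrow> nat \<Rightarrow> real \<Rightarrow> real" where
  "slice_fun a k i s = (THE y. \<exists>A. in_slice a k A \<and> xsq A 2 = s \<and> xsq A i = y)"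

end

theory Submission
  imports Defs
begin

text \<open>
  On the slice, A3, A4, A5 are rigid and A1, A2 are determined by x2 = |A1 A3|^2: A1 is the apex
  of a triangle over the diagonal A3 A5 with known sides, A2 the apex of a triangle over A3 A1,
  and strict convexity decides on which side of its base each apex lies. Hence x1, x3, x5 are
  functions of x2 on the slice (the law of cosines across a diagonal), and near a given
  configuration the slice is parametrized smoothly by x2. Differentiating the four distance
  constraints that define A1 and A2 gives linear equations for their velocities; Cramer's rule
  solves them in terms of cross products, i.e. oriented areas, and the derivatives of
  x5 = |A1 A4|^2, x1 = |A2 A5|^2 and x3 = |A2 A4|^2 follow.
\<close>

text \<open>Vertex indices are numerals; stop the simplifier from turning 1 into Suc 0.\<close>

declare One_nat_def [simp del]

definition dot :: "pt \<Rightarrow> pt \<Rightarrow> real" where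
  "dot u v = fst u * fst v + snd u * snd v"

definition cross :: "pt \<Rightarrow> pt \<Rightarrow> real" where
  "cross u v = fst u * snd v - snd u * fst v"

lemma sqd_commute: "sqd p q = sqd q p"
  unfolding sqd_def by (simp add: power2_commute)

lemma sqd_nonneg: "0 \<le> sqd p q"
  unfolding sqd_def by simp

lemma cross_mult_dot: "cross u w * dot v x = cross v w * dot u x + cross u v * dot w x"
  unfolding cross_def dot_def by (simp add: algebra_simps)

text \<open>Sixteen times the squared area of a triangle with squared side lengths a, b, c.\<close>

definition heron :: "real \<Rightarrow> real \<Rightarrow> real \<Rightarrow> real" where
  "heron a b c = 4 * a * b - (a + b - c)\<^sup>2"

lemma heron_sqd: "heron (sqd P V) (sqd P Q) (sqd Q V) = 4 * (cross (Q - P) (V - P))\<^sup>2"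
  unfolding heron_def sqd_def cross_def by (simp add: algebra_simps power2_eq_square)

lemma sqrt_heron_sqd: "sqrt (heron (sqd P V) (sqd P Q) (sqd Q V)) = 2 * \<bar>cross (Q - P) (V - P)\<bar>"
  unfolding heron_sqd by (simp add: real_sqrt_mult)

text \<open>
  The squared length of the diagonal V W of a quadrilateral P V Q W whose vertices V and W lie on
  opposite sides of the line P Q, in terms of the squared distances K = |P Q|^2, a = |P V|^2,
  b = |Q V|^2, c = |P W|^2 and d = |Q W|^2.
\<close>

definition quad_diagonal :: "real \<Rightarrow> real \<Rightarrow> real \<Rightarrow> real \<Rightarrow> real \<Rightarrow> real" where
  "quad_diagonal K a b c d =
     a + c - ((a + K - b) * (c + K - d) - sqrt (heron a K b) * sqrt (heron c K d)) / (2 * K)"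

lemma sqd_eq_quad_diagonal:
  assumes opposite: "cross (Q - P) (V - P) * cross (Q - P) (W - P) < 0"
  shows "sqd V W = quad_diagonal (sqd P Q) (sqd P V) (sqd Q V) (sqd P W) (sqd Q W)"
proof -
  have "sqd P Q \<noteq> 0"
    using opposite unfolding sqd_def cross_def by (auto simp: prod_eq_iff)
  moreover have "sqrt (heron (sqd P V) (sqd P Q) (sqd Q V)) * sqrt (heron (sqd P W) (sqd P Q) (sqd Q W))
      = - 4 * (cross (Q - P) (V - P) * cross (Q - P) (W - P))"
    using opposite unfolding sqrt_heron_sqd by (simp add: abs_mult[symmetric] abs_of_neg)
  moreover have "2 * sqd P Q * sqd V W = 2 * sqd P Q * (sqd P V + sqd P W)
      - (sqd P V + sqd P Q - sqd Q V) * (sqd P W + sqd P Q - sqd Q W)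
      - 4 * (cross (Q - P) (V - P) * cross (Q - P) (W - P))"
    unfolding sqd_def cross_def by (simp add: algebra_simps power2_eq_square)
  ultimately show ?thesis
    unfolding quad_diagonal_def by (simp add: field_simps)
qed

text \<open>
  The point at squared distance c from P and d from Q, on the left (\<open>\<sigma> = 1\<close>) or right
  (\<open>\<sigma> = -1\<close>) of the directed line P Q.
\<close>

definition apex :: "pt \<Rightarrow> pt \<Rightarrow> real \<Rightarrow> real \<Rightarrow> real \<Rightarrow> pt" where
  "apex P Q c d \<sigma> =
     (let K = sqd P Q; \<alpha> = (c + K - d) / (2 * K); \<beta> = \<sigma> * sqrt (heron c K d) / (2 * K)
      in (fst P + \<alpha> * (fst Q - fst P) - \<beta> * (snd Q - snd P),
          snd P + \<alpha> * (snd Q - snd P) + \<beta> * (fst Q - fst P)))"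

lemma sqd_apex:
  assumes K: "sqd P Q \<noteq> 0" and h: "0 \<le> heron c (sqd P Q) d" and \<sigma>: "\<sigma>\<^sup>2 = 1"
  shows "sqd P (apex P Q c d \<sigma>) = c" and "sqd Q (apex P Q c d \<sigma>) = d"
proof -
  define K where "K = sqd P Q"
  define \<alpha> where "\<alpha> = (c + K - d) / (2 * K)"
  define \<beta> where "\<beta> = \<sigma> * sqrt (heron c K d) / (2 * K)"
  have \<beta>2: "(2 * K * \<beta>)\<^sup>2 = 4 * c * K - (c + K - d)\<^sup>2"
    using K h \<sigma> unfolding \<beta>_def K_def heron_def by (simp add: power_mult_distrib)
  have apex_eq: "apex P Q c d \<sigma> = (fst P + \<alpha> * (fst Q - fst P) - \<beta> * (snd Q - snd P),
       snd P + \<alpha> * (snd Q - snd P) + \<beta> * (fst Q - fst P))"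
    unfolding apex_def Let_def \<alpha>_def \<beta>_def K_def ..
  have "4 * K * sqd P (apex P Q c d \<sigma>) = 4 * K\<^sup>2 * (\<alpha>\<^sup>2 + \<beta>\<^sup>2)"
    unfolding apex_eq K_def sqd_def by (simp add: algebra_simps power2_eq_square)
  also have "\<dots> = (c + K - d)\<^sup>2 + (2 * K * \<beta>)\<^sup>2"
    using K unfolding \<alpha>_def K_def by (simp add: field_simps power2_eq_square)
  also have "\<dots> = 4 * K * c"
    unfolding \<beta>2 by (simp add: algebra_simps power2_eq_square)
  finally show "sqd P (apex P Q c d \<sigma>) = c"
    using K unfolding K_def by simp
  have "4 * K * sqd Q (apex P Q c d \<sigma>) = 4 * K\<^sup>2 * ((\<alpha> - 1)\<^sup>2 + \<beta>\<^sup>2)"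
    unfolding apex_eq K_def sqd_def by (simp add: algebra_simps power2_eq_square)
  also have "\<dots> = (c - K - d)\<^sup>2 + (2 * K * \<beta>)\<^sup>2"
    using K unfolding \<alpha>_def K_def by (simp add: field_simps power2_eq_square)
  also have "\<dots> = 4 * K * d"
    unfolding \<beta>2 by (simp add: algebra_simps power2_eq_square)
  finally show "sqd Q (apex P Q c d \<sigma>) = d"
    using K unfolding K_def by simp
qed

lemma apex_sqd_sgn_cross:
  assumes "sqd P Q \<noteq> 0"
  shows "apex P Q (sqd P V) (sqd Q V) (sgn (cross (Q - P) (V - P))) = V"
proof -
  have "sgn (cross (Q - P) (V - P)) * sqrt (heron (sqd P V) (sqd P Q) (sqd Q V))
      = 2 * cross (Q - P) (V - P)"
    unfolding sqrt_heron_sqd by (simp add: sgn_mult_abs)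
  with assms show ?thesis
    unfolding apex_def Let_def
    by (simp add: prod_eq_iff field_simps) (simp add: sqd_def cross_def algebra_simps power2_eq_square)
qed

lemma cross_nonzero_imp_sqd_nonzero: "cross (Q - P) V \<noteq> 0 \<Longrightarrow> sqd P Q \<noteq> 0"
  unfolding cross_def sqd_def by auto

lemma has_real_derivative_fst_snd:
  assumes "(P has_vector_derivative P') (at t)"
  shows "((\<lambda>s. fst (P s)) has_real_derivative fst P') (at t)"
    and "((\<lambda>s. snd (P s)) has_real_derivative snd P') (at t)"
  using bounded_linear.has_vector_derivative[OF bounded_linear_fst assms]
    bounded_linear.has_vector_derivative[OF bounded_linear_snd assms]
  by (simp_all add: has_real_derivative_iff_has_vector_derivative)

lemma field_differentiable_real_sqrt:
  fixes g :: "real \<Rightarrow> real"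
  assumes "g field_differentiable (at t)" and "0 < g t"
  shows "(\<lambda>s. sqrt (g s)) field_differentiable (at t)"
  using assms DERIV_chain2[OF DERIV_real_sqrt] unfolding field_differentiable_def by blast

lemma apex_has_vector_derivative:
  assumes Q: "(Q has_vector_derivative Q') (at t)" and c: "c field_differentiable (at t)"
    and K: "sqd P (Q t) \<noteq> 0" and h: "0 < heron (c t) (sqd P (Q t)) d"
  shows "\<exists>A'. ((\<lambda>s. apex P (Q s) (c s) d \<sigma>) has_vector_derivative A') (at t)"
proof -
  have Q12: "(\<lambda>s. fst (Q s)) field_differentiable (at t)"
    "(\<lambda>s. snd (Q s)) field_differentiable (at t)"
    using has_real_derivative_fst_snd[OF Q] unfolding field_differentiable_def by blast+
  note rules = field_differentiable_add field_differentiable_diff field_differentiable_mult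
    field_differentiable_divide field_differentiable_power field_differentiable_const
    field_differentiable_real_sqrt
  have "(\<lambda>s. sqd P (Q s)) field_differentiable (at t)"
    unfolding sqd_def by (intro rules Q12)
  then have "(\<lambda>s. fst (apex P (Q s) (c s) d \<sigma>)) field_differentiable (at t)"
      "(\<lambda>s. snd (apex P (Q s) (c s) d \<sigma>)) field_differentiable (at t)"
    using K h unfolding apex_def Let_def heron_def fst_conv snd_conv
    by (intro rules Q12 c; simp)+
  then obtain D1 D2 where
      "((\<lambda>s. fst (apex P (Q s) (c s) d \<sigma>)) has_vector_derivative D1) (at t)"
      "((\<lambda>s. snd (apex P (Q s) (c s) d \<sigma>)) has_vector_derivative D2) (at t)"
    unfolding field_differentiable_def has_real_derivative_iff_has_vector_derivative by blast
  from has_vector_derivative_Pair[OF this] show ?thesis by auto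
qed

lemma has_real_derivative_sqd:
  assumes P: "(P has_vector_derivative P') (at t)" and Q: "(Q has_vector_derivative Q') (at t)"
  shows "((\<lambda>s. sqd (P s) (Q s)) has_real_derivative 2 * dot (P t - Q t) (P' - Q')) (at t)"
  using has_real_derivative_fst_snd[OF P] has_real_derivative_fst_snd[OF Q]
  unfolding sqd_def dot_def by (auto intro!: derivative_eq_intros simp: algebra_simps)

lemma DERIV_unique_eventually_eq:
  assumes "(f has_real_derivative D) (at t)" and "(g has_real_derivative E) (at t)"
    and "\<forall>\<^sub>F s in at t. f s = g s" and "f t = g t"
  shows "D = E"
  using assms has_field_derivative_cong_eventually DERIV_unique by metis

text \<open>
  Cramer's rule for the velocities: \<open>\<rho>\<close> is the velocity of a point r with
  |r|^2 = s and |r - e|^2 constant, and \<open>\<omega>\<close> that of a point w with |w|^2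
  and |w - r|^2 constant, both as functions of s.
\<close>

lemma apex_velocity:
  assumes "2 * dot r \<rho> = 1" and "dot (r - e) \<rho> = 0"
  shows "cross r e * (2 * dot v \<rho>) = cross v e + cross r v"
proof -
  have "2 * dot e \<rho> = 1"
    using assms unfolding dot_def by (simp add: algebra_simps)
  have "cross r e * (2 * dot v \<rho>) = cross v e * (2 * dot r \<rho>) + cross r v * (2 * dot e \<rho>)"
    using cross_mult_dot[of r e v \<rho>] by (simp add: algebra_simps)
  also have "\<dots> = cross v e + cross r v"
    using assms(1) \<open>2 * dot e \<rho> = 1\<close> by simp
  finally show ?thesis .
qed

lemma apex_over_apex_velocity:
  assumes "2 * dot r \<rho> = 1" and "dot (r - e) \<rho> = 0"
    and "dot w \<omega> = 0" and "dot (w - r) (\<omega> - \<rho>) = 0"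
  shows "cross w r * cross r e * (2 * dot v \<omega>) = cross w v * cross (r - w) (e - w)"
proof -
  have "2 * dot r \<omega> = 1 - 2 * dot w \<rho>"
    using assms(1,3,4) unfolding dot_def by (simp add: algebra_simps)
  moreover have "cross r e * (2 * dot w \<rho>) = cross w e + cross r w"
    by (rule apex_velocity[OF assms(1,2)])
  moreover have "cross w r * dot v \<omega> = cross w v * dot r \<omega>"
    using cross_mult_dot[of w r v \<omega>] assms(3) by simp
  ultimately show ?thesis
    unfolding cross_def dot_def by (simp add: algebra_simps) algebra
qed

lemma vtx_eval [simp]:
  "vtx C 1 = C 1" "vtx C 2 = C 2" "vtx C 3 = C 3" "vtx C 4 = C 4" "vtx C 5 = C 5"
  "vtx C 6 = C 1" "vtx C 7 = C 2" "vtx C 9 = C 4"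
  unfolding vtx_def by (rule arg_cong[where f = C], simp)+

lemma xsq_eval:
  "xsq C 1 = sqd (C 5) (C 2)" "xsq C 2 = sqd (C 1) (C 3)"
  "xsq C 3 = sqd (C 2) (C 4)" "xsq C 5 = sqd (C 4) (C 1)"
  unfolding xsq_def by simp_all

lemma oarea_eq_cross: "oarea C i j l = cross (vtx C j - vtx C i) (vtx C l - vtx C i) / 2"
  unfolding oarea_def cross_def Let_def by simp

lemma strictly_convex_same_sign:
  assumes "strictly_convex C" and "i \<in> {1..5}" "j \<in> {1..5}" "j \<noteq> i" "j \<noteq> i mod 5 + 1"
  shows "0 < oarea C 1 2 3 * oarea C i (i + 1) j"
proof -
  from assms(1) consider
      (pos) "\<forall>i\<in>{1..5}. \<forall>j\<in>{1..5}. j \<noteq> i \<and> j \<noteq> i mod 5 + 1 \<longrightarrow> 0 < oarea C i (i + 1) j"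
    | (neg) "\<forall>i\<in>{1..5}. \<forall>j\<in>{1..5}. j \<noteq> i \<and> j \<noteq> i mod 5 + 1 \<longrightarrow> oarea C i (i + 1) j < 0"
    unfolding strictly_convex_def by blast
  then show ?thesis
  proof cases
    case pos
    from pos[rule_format, of 1 3] pos[rule_format, of i j] assms(2-) show ?thesis
      by simp
  next
    case neg
    from neg[rule_format, of 1 3] neg[rule_format, of i j] assms(2-) show ?thesis
      by (simp add: mult_neg_neg)
  qed
qed

lemma strictly_convex_opposite_sides:
  assumes "strictly_convex C"
  shows "cross (C 5 - C 3) (C 4 - C 3) * cross (C 5 - C 3) (C 1 - C 3) < 0"
    and "cross (C 5 - C 3) (C 4 - C 3) * cross (C 5 - C 3) (C 2 - C 3) < 0"
    and "cross (C 1 - C 3) (C 5 - C 3) * cross (C 1 - C 3) (C 2 - C 3) < 0"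
proof -
  have same_sign: "0 < y * z" if "0 < x * y" "0 < x * z" for x y z :: real
    using that by (auto simp: zero_less_mult_iff)
  have edges: "0 < oarea C 1 2 3 * oarea C 2 3 5" "0 < oarea C 1 2 3 * oarea C 3 4 5"
    "0 < oarea C 1 2 3 * oarea C 5 6 3"
    using strictly_convex_same_sign[OF assms, of 2 5] strictly_convex_same_sign[OF assms, of 3 5]
      strictly_convex_same_sign[OF assms, of 5 3] by simp_all
  have crosses: "cross (C 5 - C 3) (C 4 - C 3) = - 2 * oarea C 3 4 5"
    "cross (C 5 - C 3) (C 1 - C 3) = 2 * oarea C 5 6 3"
    "cross (C 5 - C 3) (C 2 - C 3) = 2 * oarea C 2 3 5"
    "cross (C 1 - C 3) (C 5 - C 3) = - 2 * oarea C 5 6 3"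
    "cross (C 1 - C 3) (C 2 - C 3) = 2 * oarea C 1 2 3"
    unfolding oarea_eq_cross cross_def by (simp_all add: algebra_simps)
  show "cross (C 5 - C 3) (C 4 - C 3) * cross (C 5 - C 3) (C 1 - C 3) < 0"
    using same_sign[OF edges(2,3)] unfolding crosses by simp
  show "cross (C 5 - C 3) (C 4 - C 3) * cross (C 5 - C 3) (C 2 - C 3) < 0"
    using same_sign[OF edges(2,1)] unfolding crosses by simp
  show "cross (C 1 - C 3) (C 5 - C 3) * cross (C 1 - C 3) (C 2 - C 3) < 0"
    using edges(3) unfolding crosses by (simp add: mult.commute)
qed

lemma eventually_strictly_convex:
  assumes lim: "\<And>i. ((\<lambda>s. P s i) \<longlongrightarrow> A i) F" and convex: "strictly_convex A"
  shows "\<forall>\<^sub>F s in F. strictly_convex (P s)"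
proof -
  have area_lim: "((\<lambda>s. oarea (P s) i j l) \<longlongrightarrow> oarea A i j l) F" for i j l
    unfolding oarea_def Let_def vtx_def by (intro tendsto_intros lim) simp
  define I where
    "I = {(i, j). i \<in> {1..5::nat} \<and> j \<in> {1..5::nat} \<and> j \<noteq> i \<and> j \<noteq> i mod 5 + 1}"
  have "finite I"
    unfolding I_def by (rule finite_subset[of _ "{1..5} \<times> {1..5}"]) auto
  have convex_iff: "strictly_convex C \<longleftrightarrow>
      (\<forall>(i, j)\<in>I. 0 < oarea C i (i + 1) j) \<or> (\<forall>(i, j)\<in>I. oarea C i (i + 1) j < 0)" for C
    unfolding strictly_convex_def I_def by auto
  from convex consider "\<forall>(i, j)\<in>I. 0 < oarea A i (i + 1) j" | "\<forall>(i, j)\<in>I. oarea A i (i + 1) j < 0"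
    unfolding convex_iff by blast
  then show ?thesis
  proof cases
    case 1
    then have "\<forall>\<^sub>F s in F. \<forall>(i, j)\<in>I. 0 < oarea (P s) i (i + 1) j"
      using \<open>finite I\<close> by (auto intro!: eventually_ball_finite order_tendstoD(1)[OF area_lim])
    then show ?thesis
      unfolding convex_iff by (rule eventually_mono) blast
  next
    case 2
    then have "\<forall>\<^sub>F s in F. \<forall>(i, j)\<in>I. oarea (P s) i (i + 1) j < 0"
      using \<open>finite I\<close> by (auto intro!: eventually_ball_finite order_tendstoD(2)[OF area_lim])
    then show ?thesis
      unfolding convex_iff by (rule eventually_mono) blast
  qed
qed

lemma realizes_sqd:
  assumes "realizes a C" and "i \<in> {1..5}"
  shows "sqd (vtx C i) (vtx C (i + 1)) = (a i)\<^sup>2"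
proof -
  have "sqrt (sqd (vtx C i) (vtx C (i + 1))) = a i"
    using assms unfolding realizes_def by blast
  then show ?thesis
    using real_sqrt_pow2[OF sqd_nonneg[of "vtx C i" "vtx C (i + 1)"]] by simp
qed

lemma in_slice_sqd:
  assumes "in_slice a k C"
  shows "sqd (C 1) (C 2) = (a 1)\<^sup>2" "sqd (C 2) (C 3) = (a 2)\<^sup>2" "sqd (C 3) (C 4) = (a 3)\<^sup>2"
    "sqd (C 4) (C 5) = (a 4)\<^sup>2" "sqd (C 5) (C 1) = (a 5)\<^sup>2" "sqd (C 3) (C 5) = k\<^sup>2"
proof -
  have "realizes a C" and k: "sqrt (sqd (C 3) (C 5)) = k"
    using assms unfolding in_slice_def by auto
  then show "sqd (C 1) (C 2) = (a 1)\<^sup>2" "sqd (C 2) (C 3) = (a 2)\<^sup>2" "sqd (C 3) (C 4) = (a 3)\<^sup>2"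
    "sqd (C 4) (C 5) = (a 4)\<^sup>2" "sqd (C 5) (C 1) = (a 5)\<^sup>2"
    using realizes_sqd[of a C 1] realizes_sqd[of a C 2] realizes_sqd[of a C 3]
      realizes_sqd[of a C 4] realizes_sqd[of a C 5] by simp_all
  show "sqd (C 3) (C 5) = k\<^sup>2"
    using k real_sqrt_pow2[OF sqd_nonneg[of "C 3" "C 5"]] by simp
qed

lemma realizes_if_sqd:
  assumes "\<forall>i\<in>{1..5}. a i > 0"
    and "sqd (C 1) (C 2) = (a 1)\<^sup>2" "sqd (C 2) (C 3) = (a 2)\<^sup>2" "sqd (C 3) (C 4) = (a 3)\<^sup>2"
    "sqd (C 4) (C 5) = (a 4)\<^sup>2" "sqd (C 5) (C 1) = (a 5)\<^sup>2"
  shows "realizes a C"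
  unfolding realizes_def
proof
  fix i :: nat
  assume i: "i \<in> {1..5}"
  then have "i = 1 \<or> i = 2 \<or> i = 3 \<or> i = 4 \<or> i = 5" and "a i > 0"
    using assms(1) by auto
  then show "sqrt (sqd (vtx C i) (vtx C (i + 1))) = a i"
    using assms(2-) by (elim disjE) simp_all
qed

lemma in_slice_quad_diagonals:
  assumes "in_slice a k C"
  shows "xsq C 5 = quad_diagonal (k\<^sup>2) ((a 3)\<^sup>2) ((a 4)\<^sup>2) (xsq C 2) ((a 5)\<^sup>2)"
    and "xsq C 1 = quad_diagonal (xsq C 2) (k\<^sup>2) ((a 5)\<^sup>2) ((a 2)\<^sup>2) ((a 1)\<^sup>2)"
    and "xsq C 3 = quad_diagonal (k\<^sup>2) ((a 3)\<^sup>2) ((a 4)\<^sup>2) ((a 2)\<^sup>2) (xsq C 1)"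
proof -
  have convex: "strictly_convex C"
    using assms unfolding in_slice_def by simp
  note x = xsq_eval[of C] sqd_commute[of "C 1" "C 3"] sqd_commute[of "C 2" "C 4"]
  note sides = in_slice_sqd[OF assms] sqd_commute[of "C 5" "C 4"] sqd_commute[of "C 3" "C 2"]
    sqd_commute[of "C 1" "C 5"] sqd_commute[of "C 2" "C 1"]
  show "xsq C 5 = quad_diagonal (k\<^sup>2) ((a 3)\<^sup>2) ((a 4)\<^sup>2) (xsq C 2) ((a 5)\<^sup>2)"
    using sqd_eq_quad_diagonal[OF strictly_convex_opposite_sides(1)[OF convex]] x sides by simp
  show "xsq C 1 = quad_diagonal (xsq C 2) (k\<^sup>2) ((a 5)\<^sup>2) ((a 2)\<^sup>2) ((a 1)\<^sup>2)"
    using sqd_eq_quad_diagonal[OF strictly_convex_opposite_sides(3)[OF convex]] x sides by simp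
  show "xsq C 3 = quad_diagonal (k\<^sup>2) ((a 3)\<^sup>2) ((a 4)\<^sup>2) ((a 2)\<^sup>2) (xsq C 1)"
    using sqd_eq_quad_diagonal[OF strictly_convex_opposite_sides(2)[OF convex]] x sides by simp
qed

lemma slice_fun_eq_xsq:
  assumes "in_slice a k C" and "i \<in> {1, 3, 5}"
  shows "slice_fun a k i (xsq C 2) = xsq C i"
  unfolding slice_fun_def
proof (rule the_equality)
  show "\<exists>C'. in_slice a k C' \<and> xsq C' 2 = xsq C 2 \<and> xsq C' i = xsq C i"
    using assms(1) by blast
  fix y
  assume "\<exists>C'. in_slice a k C' \<and> xsq C' 2 = xsq C 2 \<and> xsq C' i = y"
  then obtain C' where C': "in_slice a k C'" "xsq C' 2 = xsq C 2" "xsq C' i = y"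
    by blast
  note C = in_slice_quad_diagonals[OF assms(1)] and C'_eqs = in_slice_quad_diagonals[OF C'(1)]
  have "xsq C' 1 = xsq C 1"
    using C(2) C'_eqs(2) C'(2) by simp
  moreover have "xsq C' 3 = xsq C 3"
    using C(3) C'_eqs(3) \<open>xsq C' 1 = xsq C 1\<close> by simp
  moreover have "xsq C' 5 = xsq C 5"
    using C(1) C'_eqs(1) C'(2) by simp
  ultimately show "y = xsq C i"
    using assms(2) C'(3) by auto
qed

text \<open>
  Keeping A3, A4, A5 and rebuilding A1 and A2 with x2 = s on the same sides as in A gives a local
  inverse of x2 on the slice through A.
\<close>

definition slice_chart :: "(nat \<Rightarrow> real) \<Rightarrow> (nat \<Rightarrow> pt) \<Rightarrow> real \<Rightarrow> nat \<Rightarrow> pt" where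
  "slice_chart a A s =
     (let R = apex (A 3) (A 5) s ((a 5)\<^sup>2) (sgn (cross (A 5 - A 3) (A 1 - A 3)));
          W = apex (A 3) R ((a 2)\<^sup>2) ((a 1)\<^sup>2) (sgn (cross (A 1 - A 3) (A 2 - A 3)))
      in A(1 := R, 2 := W))"

lemma slice_chart_apply:
  "slice_chart a A s 1 = apex (A 3) (A 5) s ((a 5)\<^sup>2) (sgn (cross (A 5 - A 3) (A 1 - A 3)))"
  "slice_chart a A s 2 =
     apex (A 3) (slice_chart a A s 1) ((a 2)\<^sup>2) ((a 1)\<^sup>2) (sgn (cross (A 1 - A 3) (A 2 - A 3)))"
  "i \<noteq> 1 \<Longrightarrow> i \<noteq> 2 \<Longrightarrow> slice_chart a A s i = A i"
  unfolding slice_chart_def Let_def by simp_all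

lemma in_slice_nondegenerate:
  assumes "in_slice a k A"
  shows "sqd (A 3) (A 5) \<noteq> 0" and "sqd (A 3) (A 1) \<noteq> 0"
    and "0 < heron (xsq A 2) (sqd (A 3) (A 5)) ((a 5)\<^sup>2)"
    and "0 < heron ((a 2)\<^sup>2) (xsq A 2) ((a 1)\<^sup>2)"
    and "(sgn (cross (A 5 - A 3) (A 1 - A 3)))\<^sup>2 = 1"
    and "(sgn (cross (A 1 - A 3) (A 2 - A 3)))\<^sup>2 = 1"
proof -
  have "cross (A 5 - A 3) (A 1 - A 3) \<noteq> 0" "cross (A 1 - A 3) (A 2 - A 3) \<noteq> 0"
    using strictly_convex_opposite_sides[of A] assms unfolding in_slice_def by auto
  moreover have "xsq A 2 = sqd (A 3) (A 1)"
    unfolding xsq_eval by (rule sqd_commute)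
  moreover have "(a 5)\<^sup>2 = sqd (A 5) (A 1)" "(a 2)\<^sup>2 = sqd (A 3) (A 2)" "(a 1)\<^sup>2 = sqd (A 1) (A 2)"
    using in_slice_sqd[OF assms] by (simp_all add: sqd_commute)
  ultimately show "sqd (A 3) (A 5) \<noteq> 0" "sqd (A 3) (A 1) \<noteq> 0"
    "0 < heron (xsq A 2) (sqd (A 3) (A 5)) ((a 5)\<^sup>2)"
    "0 < heron ((a 2)\<^sup>2) (xsq A 2) ((a 1)\<^sup>2)"
    "(sgn (cross (A 5 - A 3) (A 1 - A 3)))\<^sup>2 = 1"
    "(sgn (cross (A 1 - A 3) (A 2 - A 3)))\<^sup>2 = 1"
    by (auto simp: heron_sqd sgn_if dest: cross_nonzero_imp_sqd_nonzero)
qed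

lemma slice_chart_at_base:
  assumes "in_slice a k A"
  shows "slice_chart a A (xsq A 2) = A"
proof -
  have "xsq A 2 = sqd (A 3) (A 1)"
    unfolding xsq_eval by (rule sqd_commute)
  moreover have "(a 5)\<^sup>2 = sqd (A 5) (A 1)" "(a 2)\<^sup>2 = sqd (A 3) (A 2)" "(a 1)\<^sup>2 = sqd (A 1) (A 2)"
    using in_slice_sqd[OF assms] by (simp_all add: sqd_commute)
  ultimately show ?thesis
    unfolding slice_chart_def Let_def using in_slice_nondegenerate(1,2)[OF assms]
    by (simp add: apex_sqd_sgn_cross)
qed

lemma slice_chart_constraints:
  assumes "in_slice a k A"
  shows "\<forall>\<^sub>F s in at (xsq A 2).
    sqd (A 3) (slice_chart a A s 1) = s \<and> sqd (A 5) (slice_chart a A s 1) = (a 5)\<^sup>2 \<and>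
    sqd (A 3) (slice_chart a A s 2) = (a 2)\<^sup>2 \<and>
    sqd (slice_chart a A s 1) (slice_chart a A s 2) = (a 1)\<^sup>2"
proof -
  note nondeg = in_slice_nondegenerate[OF assms]
  have "isCont (\<lambda>s. heron s (sqd (A 3) (A 5)) ((a 5)\<^sup>2)) (xsq A 2)"
    "isCont (\<lambda>s. heron ((a 2)\<^sup>2) s ((a 1)\<^sup>2)) (xsq A 2)"
    unfolding heron_def by (intro continuous_intros)+
  then have "\<forall>\<^sub>F s in at (xsq A 2).
      0 < heron s (sqd (A 3) (A 5)) ((a 5)\<^sup>2) \<and> 0 < heron ((a 2)\<^sup>2) s ((a 1)\<^sup>2)"
    using nondeg(3,4) unfolding isCont_def by (intro eventually_conj order_tendstoD(1))
  then show ?thesis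
  proof eventually_elim
    case (elim s)
    then have "s \<noteq> 0"
      by (auto simp: heron_def)
    have R: "sqd (A 3) (slice_chart a A s 1) = s" "sqd (A 5) (slice_chart a A s 1) = (a 5)\<^sup>2"
      using sqd_apex[OF nondeg(1) _ nondeg(5)] elim unfolding slice_chart_apply by auto
    moreover have "sqd (A 3) (slice_chart a A s 2) = (a 2)\<^sup>2 \<and>
        sqd (slice_chart a A s 1) (slice_chart a A s 2) = (a 1)\<^sup>2"
      using sqd_apex[of "A 3" "slice_chart a A s 1", OF _ _ nondeg(6)] elim \<open>s \<noteq> 0\<close>
      unfolding slice_chart_apply(2)[of a A s] R(1) by auto
    ultimately show ?case by blast
  qed
qed

lemma slice_chart_has_vector_derivative:
  assumes "in_slice a k A"
  obtains R' W' where "((\<lambda>s. slice_chart a A s 1) has_vector_derivative R') (at (xsq A 2))"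
    and "((\<lambda>s. slice_chart a A s 2) has_vector_derivative W') (at (xsq A 2))"
proof -
  note nondeg = in_slice_nondegenerate[OF assms]
  have "\<exists>R'. ((\<lambda>s. slice_chart a A s 1) has_vector_derivative R') (at (xsq A 2))"
    unfolding slice_chart_apply
    by (rule apex_has_vector_derivative) (use nondeg in \<open>auto intro: has_vector_derivative_const\<close>)
  then obtain R' where R': "((\<lambda>s. slice_chart a A s 1) has_vector_derivative R') (at (xsq A 2))" ..
  moreover have "slice_chart a A (xsq A 2) 1 = A 1"
    using slice_chart_at_base[OF assms] by simp
  ultimately have "\<exists>W'. ((\<lambda>s. slice_chart a A s 2) has_vector_derivative W') (at (xsq A 2))"
    unfolding slice_chart_apply(2)[of a A]
    by (intro apex_has_vector_derivative[OF R']) (use nondeg in \<open>auto simp: sqd_commute xsq_eval\<close>)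
  then obtain W' where "((\<lambda>s. slice_chart a A s 2) has_vector_derivative W') (at (xsq A 2))" ..
  with R' that show ?thesis by blast
qed

lemma slice_chart_in_slice:
  assumes apos: "\<forall>i\<in>{1..5}. a i > 0" and A: "in_slice a k A"
  shows "\<forall>\<^sub>F s in at (xsq A 2). in_slice a k (slice_chart a A s) \<and> xsq (slice_chart a A s) 2 = s"
proof -
  obtain R' W' where R': "((\<lambda>s. slice_chart a A s 1) has_vector_derivative R') (at (xsq A 2))"
    and W': "((\<lambda>s. slice_chart a A s 2) has_vector_derivative W') (at (xsq A 2))"
    using slice_chart_has_vector_derivative[OF A] .
  have "((\<lambda>s. slice_chart a A s i) \<longlongrightarrow> A i) (at (xsq A 2))" for i
  proof -
    consider "i = 1" | "i = 2" | "i \<noteq> 1" "i \<noteq> 2" by blast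
    then show ?thesis
    proof cases
      case 1
      with has_vector_derivative_continuous[OF R'] show ?thesis
        using slice_chart_at_base[OF A] by (metis continuous_at)
    next
      case 2
      with has_vector_derivative_continuous[OF W'] show ?thesis
        using slice_chart_at_base[OF A] by (metis continuous_at)
    qed (simp add: slice_chart_apply)
  qed
  then have "\<forall>\<^sub>F s in at (xsq A 2). strictly_convex (slice_chart a A s)"
    using A unfolding in_slice_def by (blast intro: eventually_strictly_convex)
  with slice_chart_constraints[OF A] show ?thesis
  proof eventually_elim
    case (elim s)
    note sides = in_slice_sqd[OF A] and fixed = slice_chart_apply(3)[of _ a A s]
    have "realizes a (slice_chart a A s)"
      using elim sides by (intro realizes_if_sqd[OF apos]) (simp_all add: fixed sqd_commute)
    moreover have "sqrt (sqd (slice_chart a A s 3) (slice_chart a A s 5)) = k"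
      using A unfolding in_slice_def by (simp add: fixed)
    moreover have "xsq (slice_chart a A s) 2 = s"
      using elim unfolding xsq_eval by (simp add: fixed sqd_commute)
    ultimately show ?case
      using elim unfolding in_slice_def by simp
  qed
qed

lemma slice_chart_velocity:
  assumes A: "in_slice a k A"
    and R': "((\<lambda>s. slice_chart a A s 1) has_vector_derivative R') (at (xsq A 2))"
    and W': "((\<lambda>s. slice_chart a A s 2) has_vector_derivative W') (at (xsq A 2))"
  shows "2 * dot (A 1 - A 3) R' = 1" and "dot (A 1 - A 5) R' = 0"
    and "dot (A 2 - A 3) W' = 0" and "dot (A 2 - A 1) (W' - R') = 0"
proof -
  note constraints = slice_chart_constraints[OF A]
  have base: "slice_chart a A (xsq A 2) 1 = A 1" "slice_chart a A (xsq A 2) 2 = A 2"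
    using slice_chart_at_base[OF A] by simp_all
  have x2: "sqd (A 3) (A 1) = xsq A 2"
    unfolding xsq_eval by (rule sqd_commute)
  note const = has_vector_derivative_const and sqd_A = in_slice_sqd[OF A]
  have "2 * dot (A 3 - A 1) (0 - R') = 1"
    by (rule DERIV_unique_eventually_eq[OF has_real_derivative_sqd[OF const R', unfolded base]
          DERIV_ident])
      (use constraints x2 in \<open>auto elim: eventually_mono simp: base\<close>)
  then show "2 * dot (A 1 - A 3) R' = 1"
    unfolding dot_def by (simp add: algebra_simps)
  have "2 * dot (A 5 - A 1) (0 - R') = 0"
    by (rule DERIV_unique_eventually_eq[OF has_real_derivative_sqd[OF const R', unfolded base]
          DERIV_const])
      (use constraints sqd_A in \<open>auto elim: eventually_mono simp: base sqd_commute\<close>)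
  then show "dot (A 1 - A 5) R' = 0"
    unfolding dot_def by (simp add: algebra_simps)
  have "2 * dot (A 3 - A 2) (0 - W') = 0"
    by (rule DERIV_unique_eventually_eq[OF has_real_derivative_sqd[OF const W', unfolded base]
          DERIV_const])
      (use constraints sqd_A in \<open>auto elim: eventually_mono simp: base sqd_commute\<close>)
  then show "dot (A 2 - A 3) W' = 0"
    unfolding dot_def by (simp add: algebra_simps)
  have "2 * dot (A 1 - A 2) (R' - W') = 0"
    by (rule DERIV_unique_eventually_eq[OF has_real_derivative_sqd[OF R' W', unfolded base]
          DERIV_const])
      (use constraints sqd_A in \<open>auto elim: eventually_mono simp: base\<close>)
  then show "dot (A 2 - A 1) (W' - R') = 0"
    unfolding dot_def by (simp add: algebra_simps)
qed

lemma pentagon_velocity_areas: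
  assumes v: "2 * dot (A 1 - A 3) R' = 1" "dot (A 1 - A 5) R' = 0"
    "dot (A 2 - A 3) W' = 0" "dot (A 2 - A 1) (W' - R') = 0"
    and sides: "cross (A 1 - A 3) (A 5 - A 3) * cross (A 1 - A 3) (A 2 - A 3) < 0"
  shows "2 * dot (A 4 - A 1) (0 - R') = oarea A 1 4 5 / oarea A 1 3 5"
    and "- (2 * dot (A 5 - A 2) (0 - W')) =
      oarea A 1 2 5 / oarea A 1 2 3 * (oarea A 2 3 5 / oarea A 1 3 5)"
    and "- (2 * dot (A 2 - A 4) (W' - 0)) =
      oarea A 2 3 4 / oarea A 1 3 5 * (oarea A 1 2 5 / oarea A 1 2 3)"
proof -
  define r e w q where "r = A 1 - A 3" and "e = A 5 - A 3" and "w = A 2 - A 3" and "q = A 4 - A 3"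
  have areas: "oarea A 1 3 5 = - cross r e / 2" "oarea A 1 2 3 = - cross w r / 2"
    "oarea A 1 4 5 = - cross (r - q) (e - q) / 2" "oarea A 1 2 5 = - cross (r - w) (e - w) / 2"
    "oarea A 2 3 5 = - cross w e / 2" "oarea A 2 3 4 = - cross w q / 2"
    unfolding oarea_eq_cross cross_def r_def e_def w_def q_def by (simp_all add: algebra_simps)
  have vel: "2 * dot r R' = 1" "dot (r - e) R' = 0" "dot w W' = 0" "dot (w - r) (W' - R') = 0"
    using v unfolding r_def e_def w_def dot_def by (simp_all add: algebra_simps)
  have "cross r e * cross r w < 0"
    using sides unfolding r_def e_def w_def .
  moreover have "cross w r = - cross r w"
    unfolding cross_def by simp
  ultimately have nonzero: "cross r e \<noteq> 0" "cross w r \<noteq> 0"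
    by auto
  have "cross r e * (2 * dot (A 4 - A 1) (0 - R')) =
      cross r e * (2 * dot r R') - cross r e * (2 * dot q R')"
    unfolding r_def q_def dot_def by (simp add: algebra_simps)
  also have "\<dots> = cross (r - q) (e - q)"
    unfolding apex_velocity[OF vel(1,2)] vel(1) by (simp add: cross_def algebra_simps)
  finally show "2 * dot (A 4 - A 1) (0 - R') = oarea A 1 4 5 / oarea A 1 3 5"
    using nonzero unfolding areas by (simp add: field_simps)
  have x1: "- (2 * dot (A 5 - A 2) (0 - W')) = 2 * dot e W'"
    using vel(3) unfolding e_def w_def dot_def by (simp add: algebra_simps)
  show "- (2 * dot (A 5 - A 2) (0 - W')) =
      oarea A 1 2 5 / oarea A 1 2 3 * (oarea A 2 3 5 / oarea A 1 3 5)"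
    unfolding x1 areas using apex_over_apex_velocity[OF vel, of e] nonzero
    by (simp add: field_simps)
  have x3: "- (2 * dot (A 2 - A 4) (W' - 0)) = 2 * dot q W'"
    using vel(3) unfolding q_def w_def dot_def by (simp add: algebra_simps)
  show "- (2 * dot (A 2 - A 4) (W' - 0)) =
      oarea A 2 3 4 / oarea A 1 3 5 * (oarea A 1 2 5 / oarea A 1 2 3)"
    unfolding x3 areas using apex_over_apex_velocity[OF vel, of q] nonzero
    by (simp add: field_simps)
qed

lemma slice_fun_DERIV_iff_slice_chart:
  assumes apos: "\<forall>i\<in>{1..5}. a i > 0" and A: "in_slice a k A" and i: "i \<in> {1, 3, 5}"
  shows "(slice_fun a k i has_real_derivative D) (at (xsq A 2)) \<longleftrightarrow>
    ((\<lambda>s. xsq (slice_chart a A s) i) has_real_derivative D) (at (xsq A 2))"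
proof (rule has_field_derivative_cong_eventually)
  show "\<forall>\<^sub>F s in at (xsq A 2). slice_fun a k i s = xsq (slice_chart a A s) i"
    using slice_chart_in_slice[OF apos A] by eventually_elim (metis slice_fun_eq_xsq i)
  show "slice_fun a k i (xsq A 2) = xsq (slice_chart a A (xsq A 2)) i"
    unfolding slice_chart_at_base[OF A] using slice_fun_eq_xsq[OF A i] .
qed

lemma slice_fun_has_real_derivative:
  assumes apos: "\<forall>i\<in>{1..5}. a i > 0" and A: "in_slice a k A"
    and R': "((\<lambda>s. slice_chart a A s 1) has_vector_derivative R') (at (xsq A 2))"
    and W': "((\<lambda>s. slice_chart a A s 2) has_vector_derivative W') (at (xsq A 2))"
  shows "(slice_fun a k 1 has_real_derivative 2 * dot (A 5 - A 2) (0 - W')) (at (xsq A 2))"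
    and "(slice_fun a k 3 has_real_derivative 2 * dot (A 2 - A 4) (W' - 0)) (at (xsq A 2))"
    and "(slice_fun a k 5 has_real_derivative 2 * dot (A 4 - A 1) (0 - R')) (at (xsq A 2))"
proof -
  note base = slice_chart_at_base[OF A] and fixed = slice_chart_apply(3)[of _ a A]
    and const = has_vector_derivative_const
  have "((\<lambda>s. sqd (slice_chart a A s 5) (slice_chart a A s 2)) has_real_derivative
      2 * dot (A 5 - A 2) (0 - W')) (at (xsq A 2))"
    using has_real_derivative_sqd[OF const W'] by (simp add: fixed base)
  then show "(slice_fun a k 1 has_real_derivative 2 * dot (A 5 - A 2) (0 - W')) (at (xsq A 2))"
    using slice_fun_DERIV_iff_slice_chart[OF apos A, of 1] by (simp add: xsq_eval(1))
  have "((\<lambda>s. sqd (slice_chart a A s 2) (slice_chart a A s 4)) has_real_derivative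
      2 * dot (A 2 - A 4) (W' - 0)) (at (xsq A 2))"
    using has_real_derivative_sqd[OF W' const] by (simp add: fixed base)
  then show "(slice_fun a k 3 has_real_derivative 2 * dot (A 2 - A 4) (W' - 0)) (at (xsq A 2))"
    using slice_fun_DERIV_iff_slice_chart[OF apos A, of 3] by (simp add: xsq_eval(3))
  have "((\<lambda>s. sqd (slice_chart a A s 4) (slice_chart a A s 1)) has_real_derivative
      2 * dot (A 4 - A 1) (0 - R')) (at (xsq A 2))"
    using has_real_derivative_sqd[OF const R'] by (simp add: fixed base)
  then show "(slice_fun a k 5 has_real_derivative 2 * dot (A 4 - A 1) (0 - R')) (at (xsq A 2))"
    using slice_fun_DERIV_iff_slice_chart[OF apos A, of 5] by (simp add: xsq_eval(4))
qed

theorem lemma4: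
  fixes a :: "nat \<Rightarrow> real" and k :: real and A :: "nat \<Rightarrow> real \<times> real"
  assumes "\<forall>i\<in>{1..5}. a i > 0"
    and "in_slice a k A"
  shows "((\<lambda>s. - slice_fun a k 1 s) has_real_derivative
            (oarea A 1 2 5 / oarea A 1 2 3) * (oarea A 2 3 5 / oarea A 1 3 5)) (at (xsq A 2)) \<and>
         ((\<lambda>s. - slice_fun a k 3 s) has_real_derivative
            (oarea A 2 3 4 / oarea A 1 3 5) * (oarea A 1 2 5 / oarea A 1 2 3)) (at (xsq A 2)) \<and>
         (slice_fun a k 5 has_real_derivative
            oarea A 1 4 5 / oarea A 1 3 5) (at (xsq A 2))"
proof -
  obtain R' W' where R': "((\<lambda>s. slice_chart a A s 1) has_vector_derivative R') (at (xsq A 2))"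
    and W': "((\<lambda>s. slice_chart a A s 2) has_vector_derivative W') (at (xsq A 2))"
    using slice_chart_has_vector_derivative[OF assms(2)] .
  have "strictly_convex A"
    using assms(2) unfolding in_slice_def by simp
  note areas = pentagon_velocity_areas[OF slice_chart_velocity[OF assms(2) R' W']
      strictly_convex_opposite_sides(3)[OF this]]
  note derivatives = slice_fun_has_real_derivative[OF assms R' W']
  show ?thesis
    using DERIV_minus[OF derivatives(1)] DERIV_minus[OF derivatives(2)] derivatives(3)
    unfolding areas by simp
qed

end
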